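(* Let $(\mathcal C,\otimes,\sigma,I,(\,)^* )$ be a compact closed category. An object $R$ of $\mathcal C$ is (extensionally) reflexive if and only if $R$ is both self-dual and self-similar.
   Context: In a compact closed category the internal hom is $[A\to B]=A^*\otimes B$. An object $R$ is (extensionally) reflexive if $R\cong[R\to R]$, i.e. there are mutually inverse isomorphisms $\mathrm{app}:R\to[R\to R]$ and $\mathrm{lam}:[R\to R]\to R$. An object $N$ is self-similar if $N\cong N\otimes N$ (the isomorphisms $N\otimes N\to N$ and $N\to N\otimes N$ are called code and decode arrows). An object $S$ is self-dual if $S\cong S^*$. *)

theory Defs
  imports Main
begin

text \<open>Arrows carry their domain and codomain; composition is written
  cmp C g f for "g after f".  Structural isomorphisms are given together with
  their inverses (which are unique, so this is no loss of generality).\<close>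

record ('o, 'a) cc_data =
  Ob :: "'o set"
  Ar :: "'a set"
  cdom :: "'a \<Rightarrow> 'o"
  ccod :: "'a \<Rightarrow> 'o"
  cmp :: "'a \<Rightarrow> 'a \<Rightarrow> 'a"
  ident :: "'o \<Rightarrow> 'a"
  tens_ob :: "'o \<Rightarrow> 'o \<Rightarrow> 'o"
  tens_ar :: "'a \<Rightarrow> 'a \<Rightarrow> 'a"
  unit_ob :: "'o"
  assoc :: "'o \<Rightarrow> 'o \<Rightarrow> 'o \<Rightarrow> 'a"
  assoc_inv :: "'o \<Rightarrow> 'o \<Rightarrow> 'o \<Rightarrow> 'a"
  lunit :: "'o \<Rightarrow> 'a"
  lunit_inv :: "'o \<Rightarrow> 'a"
  runit :: "'o \<Rightarrow> 'a"
  runit_inv :: "'o \<Rightarrow> 'a"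
  symm :: "'o \<Rightarrow> 'o \<Rightarrow> 'a"
  dual :: "'o \<Rightarrow> 'o"
  eta :: "'o \<Rightarrow> 'a"
  eps :: "'o \<Rightarrow> 'a"

definition hom :: "('o, 'a, 'x) cc_data_scheme \<Rightarrow> 'o \<Rightarrow> 'o \<Rightarrow> 'a set" where
  "hom C A B = {f \<in> Ar C. cdom C f = A \<and> ccod C f = B}"

definition seq :: "('o, 'a, 'x) cc_data_scheme \<Rightarrow> 'a \<Rightarrow> 'a \<Rightarrow> bool" where
  "seq C g f \<longleftrightarrow> f \<in> Ar C \<and> g \<in> Ar C \<and> ccod C f = cdom C g"

definition inverse_pair :: "('o, 'a, 'x) cc_data_scheme \<Rightarrow> 'a \<Rightarrow> 'a \<Rightarrow> bool" where
  "inverse_pair C f g \<longleftrightarrow> f \<in> Ar C \<and> g \<in> Ar C \<and> ccod C f = cdom C g \<and> ccod C g = cdom C f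
     \<and> cmp C g f = ident C (cdom C f) \<and> cmp C f g = ident C (ccod C f)"

definition category :: "('o, 'a, 'x) cc_data_scheme \<Rightarrow> bool" where
  "category C \<longleftrightarrow>
     (\<forall>f \<in> Ar C. cdom C f \<in> Ob C \<and> ccod C f \<in> Ob C) \<and>
     (\<forall>A \<in> Ob C. ident C A \<in> hom C A A) \<and>
     (\<forall>f g. seq C g f \<longrightarrow> cmp C g f \<in> hom C (cdom C f) (ccod C g)) \<and>
     (\<forall>f \<in> Ar C. cmp C f (ident C (cdom C f)) = f \<and> cmp C (ident C (ccod C f)) f = f) \<and>
     (\<forall>f g h. seq C g f \<and> seq C h g \<longrightarrow> cmp C h (cmp C g f) = cmp C (cmp C h g) f)"

definition monoidal_category :: "('o, 'a, 'x) cc_data_scheme \<Rightarrow> bool" where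
  "monoidal_category C \<longleftrightarrow> category C \<and>
     unit_ob C \<in> Ob C \<and>
     (\<forall>A \<in> Ob C. \<forall>B \<in> Ob C. tens_ob C A B \<in> Ob C) \<and>
     \<comment> \<open>tensor is a bifunctor\<close>
     (\<forall>f \<in> Ar C. \<forall>g \<in> Ar C. tens_ar C f g \<in>
        hom C (tens_ob C (cdom C f) (cdom C g)) (tens_ob C (ccod C f) (ccod C g))) \<and>
     (\<forall>A \<in> Ob C. \<forall>B \<in> Ob C. tens_ar C (ident C A) (ident C B) = ident C (tens_ob C A B)) \<and>
     (\<forall>f f' g g'. seq C f' f \<and> seq C g' g \<longrightarrow>
        tens_ar C (cmp C f' f) (cmp C g' g) = cmp C (tens_ar C f' g') (tens_ar C f g)) \<and>
     \<comment> \<open>associator: natural isomorphism\<close>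
     (\<forall>A \<in> Ob C. \<forall>B \<in> Ob C. \<forall>D \<in> Ob C.
        assoc C A B D \<in> hom C (tens_ob C (tens_ob C A B) D) (tens_ob C A (tens_ob C B D)) \<and>
        inverse_pair C (assoc C A B D) (assoc_inv C A B D)) \<and>
     (\<forall>f \<in> Ar C. \<forall>g \<in> Ar C. \<forall>h \<in> Ar C.
        cmp C (assoc C (ccod C f) (ccod C g) (ccod C h)) (tens_ar C (tens_ar C f g) h) =
        cmp C (tens_ar C f (tens_ar C g h)) (assoc C (cdom C f) (cdom C g) (cdom C h))) \<and>
     \<comment> \<open>left and right unitors: natural isomorphisms\<close>
     (\<forall>A \<in> Ob C. lunit C A \<in> hom C (tens_ob C (unit_ob C) A) A \<and>
        inverse_pair C (lunit C A) (lunit_inv C A)) \<and>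
     (\<forall>A \<in> Ob C. runit C A \<in> hom C (tens_ob C A (unit_ob C)) A \<and>
        inverse_pair C (runit C A) (runit_inv C A)) \<and>
     (\<forall>f \<in> Ar C. cmp C (lunit C (ccod C f)) (tens_ar C (ident C (unit_ob C)) f) =
        cmp C f (lunit C (cdom C f))) \<and>
     (\<forall>f \<in> Ar C. cmp C (runit C (ccod C f)) (tens_ar C f (ident C (unit_ob C))) =
        cmp C f (runit C (cdom C f))) \<and>
     \<comment> \<open>pentagon\<close>
     (\<forall>A \<in> Ob C. \<forall>B \<in> Ob C. \<forall>D \<in> Ob C. \<forall>E \<in> Ob C.
        cmp C (tens_ar C (ident C A) (assoc C B D E))
          (cmp C (assoc C A (tens_ob C B D) E) (tens_ar C (assoc C A B D) (ident C E))) =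
        cmp C (assoc C A B (tens_ob C D E)) (assoc C (tens_ob C A B) D E)) \<and>
     \<comment> \<open>triangle\<close>
     (\<forall>A \<in> Ob C. \<forall>B \<in> Ob C.
        cmp C (tens_ar C (ident C A) (lunit C B)) (assoc C A (unit_ob C) B) =
        tens_ar C (runit C A) (ident C B))"

definition symmetric_monoidal_category :: "('o, 'a, 'x) cc_data_scheme \<Rightarrow> bool" where
  "symmetric_monoidal_category C \<longleftrightarrow> monoidal_category C \<and>
     (\<forall>A \<in> Ob C. \<forall>B \<in> Ob C. symm C A B \<in> hom C (tens_ob C A B) (tens_ob C B A)) \<and>
     (\<forall>f \<in> Ar C. \<forall>g \<in> Ar C.
        cmp C (symm C (ccod C f) (ccod C g)) (tens_ar C f g) =
        cmp C (tens_ar C g f) (symm C (cdom C f) (cdom C g))) \<and>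
     (\<forall>A \<in> Ob C. \<forall>B \<in> Ob C. cmp C (symm C B A) (symm C A B) = ident C (tens_ob C A B)) \<and>
     \<comment> \<open>hexagon\<close>
     (\<forall>A \<in> Ob C. \<forall>B \<in> Ob C. \<forall>D \<in> Ob C.
        cmp C (assoc C B D A) (cmp C (symm C A (tens_ob C B D)) (assoc C A B D)) =
        cmp C (tens_ar C (ident C B) (symm C A D))
          (cmp C (assoc C B A D) (tens_ar C (symm C A B) (ident C D))))"

definition compact_closed :: "('o, 'a, 'x) cc_data_scheme \<Rightarrow> bool" where
  "compact_closed C \<longleftrightarrow> symmetric_monoidal_category C \<and>
     (\<forall>A \<in> Ob C. dual C A \<in> Ob C \<and>
        eta C A \<in> hom C (unit_ob C) (tens_ob C (dual C A) A) \<and>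
        eps C A \<in> hom C (tens_ob C A (dual C A)) (unit_ob C) \<and>
        cmp C (lunit C A) (cmp C (tens_ar C (eps C A) (ident C A))
          (cmp C (assoc_inv C A (dual C A) A)
            (cmp C (tens_ar C (ident C A) (eta C A)) (runit_inv C A)))) = ident C A \<and>
        cmp C (runit C (dual C A)) (cmp C (tens_ar C (ident C (dual C A)) (eps C A))
          (cmp C (assoc C (dual C A) A (dual C A))
            (cmp C (tens_ar C (eta C A) (ident C (dual C A))) (lunit_inv C (dual C A)))))
          = ident C (dual C A))"

definition isomorphic :: "('o, 'a, 'x) cc_data_scheme \<Rightarrow> 'o \<Rightarrow> 'o \<Rightarrow> bool" where
  "isomorphic C A B \<longleftrightarrow> (\<exists>f g. f \<in> hom C A B \<and> g \<in> hom C B A \<and>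
     cmp C g f = ident C A \<and> cmp C f g = ident C B)"

definition internal_hom :: "('o, 'a, 'x) cc_data_scheme \<Rightarrow> 'o \<Rightarrow> 'o \<Rightarrow> 'o" where
  "internal_hom C A B = tens_ob C (dual C A) B"

definition reflexive_obj :: "('o, 'a, 'x) cc_data_scheme \<Rightarrow> 'o \<Rightarrow> bool" where
  "reflexive_obj C R \<longleftrightarrow> (\<exists>app lam. app \<in> hom C R (internal_hom C R R) \<and>
     lam \<in> hom C (internal_hom C R R) R \<and>
     cmp C lam app = ident C R \<and> cmp C app lam = ident C (internal_hom C R R))"

definition self_similar :: "('o, 'a, 'x) cc_data_scheme \<Rightarrow> 'o \<Rightarrow> bool" where
  "self_similar C N \<longleftrightarrow> isomorphic C N (tens_ob C N N)"

definition self_dual :: "('o, 'a, 'x) cc_data_scheme \<Rightarrow> 'o \<Rightarrow> bool" where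
  "self_dual C S \<longleftrightarrow> isomorphic C S (dual C S)"

end

theory Submission
  imports Defs
begin

text \<open>If R \<cong> R* \<otimes> R, then for every object X there is a chain of bijections, natural in X,
  hom(X, R*) \<cong> hom(R \<otimes> X, I) \<cong> hom((R \<otimes> X) \<otimes> R*, I) \<cong> hom(R \<otimes> X, R) \<cong> hom(X, R* \<otimes> R) \<cong> hom(X, R):
  all steps but the second are currying along the duality between R and R*, and the second precomposes
  with (R \<otimes> X) \<otimes> R* \<cong> (R* \<otimes> R) \<otimes> X \<cong> R \<otimes> X.  By the Yoneda lemma R \<cong> R*, and tensoring
  then gives R \<cong> R* \<otimes> R \<cong> R \<otimes> R.  Conversely R \<cong> R \<otimes> R \<cong> R* \<otimes> R whenever R \<cong> R*.\<close>

locale compact_closed_cat =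
  fixes C :: "('o,'a,'x) cc_data_scheme"
  assumes compact_closed: "compact_closed C"
begin

abbreviation compose (infixr "\<cdot>" 55) where "g \<cdot> f \<equiv> cmp C g f"
abbreviation tensor (infixr "\<otimes>" 60) where "f \<otimes> g \<equiv> tens_ar C f g"
abbreviation otensor (infixr "\<odot>" 60) where "A \<odot> B \<equiv> tens_ob C A B"
abbreviation "U \<equiv> unit_ob C"
abbreviation "idt \<equiv> ident C"
abbreviation "Obs \<equiv> Ob C"
abbreviation "Ars \<equiv> Ar C"
abbreviation "dm \<equiv> cdom C"
abbreviation "cd \<equiv> ccod C"
abbreviation "\<alpha> \<equiv> assoc C"
abbreviation "\<alpha>' \<equiv> assoc_inv C"
abbreviation "lu \<equiv> lunit C"
abbreviation "lu' \<equiv> lunit_inv C"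
abbreviation "\<rho> \<equiv> runit C"
abbreviation "\<rho>' \<equiv> runit_inv C"
abbreviation "\<sigma> \<equiv> symm C"
abbreviation "ds \<equiv> dual C"
abbreviation "\<eta> \<equiv> eta C"
abbreviation "\<epsilon> \<equiv> eps C"

lemma symmetric_monoidal: "symmetric_monoidal_category C"
  using compact_closed unfolding compact_closed_def by blast
lemma monoidal: "monoidal_category C"
  using symmetric_monoidal unfolding symmetric_monoidal_category_def by blast
lemma category: "category C"
  using monoidal unfolding monoidal_category_def by (elim conjE) simp

lemma dom_ob[simp]: "f \<in> Ars \<Longrightarrow> dm f \<in> Obs"
  and cod_ob[simp]: "f \<in> Ars \<Longrightarrow> cd f \<in> Obs"
  using category unfolding category_def by blast+
lemma idt_ar[simp]: "A \<in> Obs \<Longrightarrow> idt A \<in> Ars"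
  and idt_dom[simp]: "A \<in> Obs \<Longrightarrow> dm (idt A) = A"
  and idt_cod[simp]: "A \<in> Obs \<Longrightarrow> cd (idt A) = A"
  using category unfolding category_def hom_def by auto
lemma comp_ar[simp]: "f \<in> Ars \<Longrightarrow> g \<in> Ars \<Longrightarrow> cd f = dm g \<Longrightarrow> g \<cdot> f \<in> Ars"
  and comp_dom[simp]: "f \<in> Ars \<Longrightarrow> g \<in> Ars \<Longrightarrow> cd f = dm g \<Longrightarrow> dm (g \<cdot> f) = dm f"
  and comp_cod[simp]: "f \<in> Ars \<Longrightarrow> g \<in> Ars \<Longrightarrow> cd f = dm g \<Longrightarrow> cd (g \<cdot> f) = cd g"
  using category unfolding category_def hom_def seq_def by auto
lemma comp_assoc[simp]: "f \<in> Ars \<Longrightarrow> g \<in> Ars \<Longrightarrow> h \<in> Ars \<Longrightarrow> cd f = dm g \<Longrightarrow> cd g = dm h \<Longrightarrow>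
   (h \<cdot> g) \<cdot> f = h \<cdot> (g \<cdot> f)"
  using category unfolding category_def seq_def by metis
lemma comp_idt_right[simp]: "f \<in> Ars \<Longrightarrow> dm f = A \<Longrightarrow> f \<cdot> idt A = f"
  and comp_idt_left[simp]: "f \<in> Ars \<Longrightarrow> cd f = A \<Longrightarrow> idt A \<cdot> f = f"
  using category unfolding category_def by blast+

lemma unit_ob[simp]: "U \<in> Obs"
  using monoidal unfolding monoidal_category_def by (elim conjE) simp
lemma tensor_ob[simp]: "A \<in> Obs \<Longrightarrow> B \<in> Obs \<Longrightarrow> A \<odot> B \<in> Obs"
  using monoidal unfolding monoidal_category_def by (elim conjE) simp
lemma tensor_ar[simp]: "f \<in> Ars \<Longrightarrow> g \<in> Ars \<Longrightarrow> f \<otimes> g \<in> Ars"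
  and tensor_dom[simp]: "f \<in> Ars \<Longrightarrow> g \<in> Ars \<Longrightarrow> dm (f \<otimes> g) = dm f \<odot> dm g"
  and tensor_cod[simp]: "f \<in> Ars \<Longrightarrow> g \<in> Ars \<Longrightarrow> cd (f \<otimes> g) = cd f \<odot> cd g"
  using monoidal unfolding monoidal_category_def hom_def by auto
lemma tensor_idt[simp]: "A \<in> Obs \<Longrightarrow> B \<in> Obs \<Longrightarrow> idt A \<otimes> idt B = idt (A \<odot> B)"
  using monoidal unfolding monoidal_category_def by (elim conjE) simp
lemma interchange: "f \<in> Ars \<Longrightarrow> f' \<in> Ars \<Longrightarrow> g \<in> Ars \<Longrightarrow> g' \<in> Ars \<Longrightarrow> cd f = dm f' \<Longrightarrow> cd g = dm g' \<Longrightarrow>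
   (f' \<cdot> f) \<otimes> (g' \<cdot> g) = (f' \<otimes> g') \<cdot> (f \<otimes> g)"
  using monoidal unfolding monoidal_category_def seq_def by blast

lemma assoc_iso: "\<forall>A \<in> Obs. \<forall>B \<in> Obs. \<forall>D \<in> Obs.
    \<alpha> A B D \<in> hom C ((A \<odot> B) \<odot> D) (A \<odot> (B \<odot> D)) \<and> inverse_pair C (\<alpha> A B D) (\<alpha>' A B D)"
  using monoidal unfolding monoidal_category_def by (elim conjE) assumption
lemma lunit_iso: "\<forall>A \<in> Obs. lu A \<in> hom C (U \<odot> A) A \<and> inverse_pair C (lu A) (lu' A)"
  using monoidal unfolding monoidal_category_def by (elim conjE) assumption
lemma runit_iso: "\<forall>A \<in> Obs. \<rho> A \<in> hom C (A \<odot> U) A \<and> inverse_pair C (\<rho> A) (\<rho>' A)"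
  using monoidal unfolding monoidal_category_def by (elim conjE) assumption

lemma assoc_simps[simp]:
  assumes "A \<in> Obs" "B \<in> Obs" "D \<in> Obs"
  shows "\<alpha> A B D \<in> Ars" "dm (\<alpha> A B D) = (A \<odot> B) \<odot> D" "cd (\<alpha> A B D) = A \<odot> (B \<odot> D)"
    "\<alpha>' A B D \<in> Ars" "dm (\<alpha>' A B D) = A \<odot> (B \<odot> D)" "cd (\<alpha>' A B D) = (A \<odot> B) \<odot> D"
    "\<alpha>' A B D \<cdot> \<alpha> A B D = idt ((A \<odot> B) \<odot> D)" "\<alpha> A B D \<cdot> \<alpha>' A B D = idt (A \<odot> (B \<odot> D))"
  using assoc_iso[rule_format, OF assms] unfolding hom_def inverse_pair_def by auto
lemma lunit_simps[simp]:
  assumes "A \<in> Obs"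
  shows "lu A \<in> Ars" "dm (lu A) = U \<odot> A" "cd (lu A) = A"
    "lu' A \<in> Ars" "dm (lu' A) = A" "cd (lu' A) = U \<odot> A"
    "lu' A \<cdot> lu A = idt (U \<odot> A)" "lu A \<cdot> lu' A = idt A"
  using lunit_iso[rule_format, OF assms] unfolding hom_def inverse_pair_def by auto
lemma runit_simps[simp]:
  assumes "A \<in> Obs"
  shows "\<rho> A \<in> Ars" "dm (\<rho> A) = A \<odot> U" "cd (\<rho> A) = A"
    "\<rho>' A \<in> Ars" "dm (\<rho>' A) = A" "cd (\<rho>' A) = A \<odot> U"
    "\<rho>' A \<cdot> \<rho> A = idt (A \<odot> U)" "\<rho> A \<cdot> \<rho>' A = idt A"
  using runit_iso[rule_format, OF assms] unfolding hom_def inverse_pair_def by auto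

lemma monoidal_coherence_axioms:
  "(\<forall>f \<in> Ars. \<forall>g \<in> Ars. \<forall>h \<in> Ars.
      \<alpha> (cd f) (cd g) (cd h) \<cdot> ((f \<otimes> g) \<otimes> h) = (f \<otimes> (g \<otimes> h)) \<cdot> \<alpha> (dm f) (dm g) (dm h)) \<and>
   (\<forall>f \<in> Ars. lu (cd f) \<cdot> (idt U \<otimes> f) = f \<cdot> lu (dm f)) \<and>
   (\<forall>f \<in> Ars. \<rho> (cd f) \<cdot> (f \<otimes> idt U) = f \<cdot> \<rho> (dm f)) \<and>
   (\<forall>A \<in> Obs. \<forall>B \<in> Obs. \<forall>D \<in> Obs. \<forall>E \<in> Obs.
      (idt A \<otimes> \<alpha> B D E) \<cdot> (\<alpha> A (B \<odot> D) E \<cdot> (\<alpha> A B D \<otimes> idt E)) = \<alpha> A B (D \<odot> E) \<cdot> \<alpha> (A \<odot> B) D E) \<and>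
   (\<forall>A \<in> Obs. \<forall>B \<in> Obs. (idt A \<otimes> lu B) \<cdot> \<alpha> A U B = \<rho> A \<otimes> idt B)"
  using monoidal unfolding monoidal_category_def by (elim conjE) (intro conjI; assumption)

lemma assoc_nat: "f \<in> Ars \<Longrightarrow> g \<in> Ars \<Longrightarrow> h \<in> Ars \<Longrightarrow>
  \<alpha> (cd f) (cd g) (cd h) \<cdot> ((f \<otimes> g) \<otimes> h) = (f \<otimes> (g \<otimes> h)) \<cdot> \<alpha> (dm f) (dm g) (dm h)"
  using monoidal_coherence_axioms by blast
lemma lunit_nat: "f \<in> Ars \<Longrightarrow> lu (cd f) \<cdot> (idt U \<otimes> f) = f \<cdot> lu (dm f)"
  using monoidal_coherence_axioms by blast
lemma runit_nat: "f \<in> Ars \<Longrightarrow> \<rho> (cd f) \<cdot> (f \<otimes> idt U) = f \<cdot> \<rho> (dm f)"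
  using monoidal_coherence_axioms by blast
lemma pentagon: "A \<in> Obs \<Longrightarrow> B \<in> Obs \<Longrightarrow> D \<in> Obs \<Longrightarrow> E \<in> Obs \<Longrightarrow>
  (idt A \<otimes> \<alpha> B D E) \<cdot> (\<alpha> A (B \<odot> D) E \<cdot> (\<alpha> A B D \<otimes> idt E)) = \<alpha> A B (D \<odot> E) \<cdot> \<alpha> (A \<odot> B) D E"
  using monoidal_coherence_axioms by blast
lemma triangle: "A \<in> Obs \<Longrightarrow> B \<in> Obs \<Longrightarrow> (idt A \<otimes> lu B) \<cdot> \<alpha> A U B = \<rho> A \<otimes> idt B"
  using monoidal_coherence_axioms by blast

lemma symmetry_axioms:
  "(\<forall>A \<in> Obs. \<forall>B \<in> Obs. \<sigma> A B \<in> hom C (A \<odot> B) (B \<odot> A)) \<and>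
   (\<forall>f \<in> Ars. \<forall>g \<in> Ars. \<sigma> (cd f) (cd g) \<cdot> (f \<otimes> g) = (g \<otimes> f) \<cdot> \<sigma> (dm f) (dm g)) \<and>
   (\<forall>A \<in> Obs. \<forall>B \<in> Obs. \<sigma> B A \<cdot> \<sigma> A B = idt (A \<odot> B))"
  using symmetric_monoidal unfolding symmetric_monoidal_category_def
  by (elim conjE) (intro conjI; assumption)
lemma symm_ar[simp]: "A \<in> Obs \<Longrightarrow> B \<in> Obs \<Longrightarrow> \<sigma> A B \<in> Ars"
  and symm_dom[simp]: "A \<in> Obs \<Longrightarrow> B \<in> Obs \<Longrightarrow> dm (\<sigma> A B) = A \<odot> B"
  and symm_cod[simp]: "A \<in> Obs \<Longrightarrow> B \<in> Obs \<Longrightarrow> cd (\<sigma> A B) = B \<odot> A"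
  using symmetry_axioms unfolding hom_def by auto
lemma symm_nat: "f \<in> Ars \<Longrightarrow> g \<in> Ars \<Longrightarrow> \<sigma> (cd f) (cd g) \<cdot> (f \<otimes> g) = (g \<otimes> f) \<cdot> \<sigma> (dm f) (dm g)"
  using symmetry_axioms by blast
lemma symm_symm[simp]: "A \<in> Obs \<Longrightarrow> B \<in> Obs \<Longrightarrow> \<sigma> B A \<cdot> \<sigma> A B = idt (A \<odot> B)"
  using symmetry_axioms by blast

lemma duality_axioms: "\<forall>A \<in> Obs. ds A \<in> Obs \<and>
    \<eta> A \<in> hom C U (ds A \<odot> A) \<and> \<epsilon> A \<in> hom C (A \<odot> ds A) U \<and>
    lu A \<cdot> ((\<epsilon> A \<otimes> idt A) \<cdot> (\<alpha>' A (ds A) A \<cdot> ((idt A \<otimes> \<eta> A) \<cdot> \<rho>' A))) = idt A \<and>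
    \<rho> (ds A) \<cdot> ((idt (ds A) \<otimes> \<epsilon> A) \<cdot> (\<alpha> (ds A) A (ds A) \<cdot> ((\<eta> A \<otimes> idt (ds A)) \<cdot> lu' (ds A))))
      = idt (ds A)"
  using compact_closed unfolding compact_closed_def by (elim conjE) assumption
lemma dual_ob[simp]: "A \<in> Obs \<Longrightarrow> ds A \<in> Obs"
  and eta_ar[simp]: "A \<in> Obs \<Longrightarrow> \<eta> A \<in> Ars"
  and eta_dom[simp]: "A \<in> Obs \<Longrightarrow> dm (\<eta> A) = U"
  and eta_cod[simp]: "A \<in> Obs \<Longrightarrow> cd (\<eta> A) = ds A \<odot> A"
  and eps_ar[simp]: "A \<in> Obs \<Longrightarrow> \<epsilon> A \<in> Ars"
  and eps_dom[simp]: "A \<in> Obs \<Longrightarrow> dm (\<epsilon> A) = A \<odot> ds A"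
  and eps_cod[simp]: "A \<in> Obs \<Longrightarrow> cd (\<epsilon> A) = U"
  using duality_axioms unfolding hom_def by auto
lemma yanking: "A \<in> Obs \<Longrightarrow>
    lu A \<cdot> ((\<epsilon> A \<otimes> idt A) \<cdot> (\<alpha>' A (ds A) A \<cdot> ((idt A \<otimes> \<eta> A) \<cdot> \<rho>' A))) = idt A"
  using duality_axioms by blast
lemma yanking_dual: "A \<in> Obs \<Longrightarrow>
    \<rho> (ds A) \<cdot> ((idt (ds A) \<otimes> \<epsilon> A) \<cdot> (\<alpha> (ds A) A (ds A) \<cdot> ((\<eta> A \<otimes> idt (ds A)) \<cdot> lu' (ds A))))
      = idt (ds A)"
  using duality_axioms by blast

text \<open>The simplifier keeps composites right-nested; these rules apply an equation to a prefix
  of such a composite.\<close>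

lemma comp_reassoc: "x \<cdot> y = q \<Longrightarrow> x \<in> Ars \<Longrightarrow> y \<in> Ars \<Longrightarrow> r \<in> Ars \<Longrightarrow> cd y = dm x \<Longrightarrow> cd r = dm y \<Longrightarrow>
  x \<cdot> (y \<cdot> r) = q \<cdot> r"
  by (metis comp_assoc comp_dom)
lemma comp_reassoc3: "x \<cdot> (y \<cdot> z) = q \<Longrightarrow> x \<in> Ars \<Longrightarrow> y \<in> Ars \<Longrightarrow> z \<in> Ars \<Longrightarrow> r \<in> Ars \<Longrightarrow>
  cd y = dm x \<Longrightarrow> cd z = dm y \<Longrightarrow> cd r = dm z \<Longrightarrow> x \<cdot> (y \<cdot> (z \<cdot> r)) = q \<cdot> r"
  by (metis comp_ar comp_assoc comp_dom comp_cod)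
lemma comp_reassoc5:
  assumes q: "x \<cdot> (y \<cdot> (z \<cdot> (w \<cdot> v))) = q"
    and "x \<in> Ars" "y \<in> Ars" "z \<in> Ars" "w \<in> Ars" "v \<in> Ars" "r \<in> Ars"
    and "cd y = dm x" "cd z = dm y" "cd w = dm z" "cd v = dm w" "cd r = dm v"
  shows "x \<cdot> (y \<cdot> (z \<cdot> (w \<cdot> (v \<cdot> r)))) = q \<cdot> r"
proof -
  have "(x \<cdot> (y \<cdot> (z \<cdot> (w \<cdot> v)))) \<cdot> r = x \<cdot> (y \<cdot> (z \<cdot> (w \<cdot> (v \<cdot> r))))"
    using assms(2-) by simp
  then show ?thesis using q by metis
qed

lemma inverse_cancel[simp]:
  "A \<in> Obs \<Longrightarrow> B \<in> Obs \<Longrightarrow> D \<in> Obs \<Longrightarrow> r \<in> Ars \<Longrightarrow> cd r = (A \<odot> B) \<odot> D \<Longrightarrow> \<alpha>' A B D \<cdot> (\<alpha> A B D \<cdot> r) = r"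
  "A \<in> Obs \<Longrightarrow> B \<in> Obs \<Longrightarrow> D \<in> Obs \<Longrightarrow> r \<in> Ars \<Longrightarrow> cd r = A \<odot> (B \<odot> D) \<Longrightarrow> \<alpha> A B D \<cdot> (\<alpha>' A B D \<cdot> r) = r"
  "A \<in> Obs \<Longrightarrow> r \<in> Ars \<Longrightarrow> cd r = U \<odot> A \<Longrightarrow> lu' A \<cdot> (lu A \<cdot> r) = r"
  "A \<in> Obs \<Longrightarrow> r \<in> Ars \<Longrightarrow> cd r = A \<Longrightarrow> lu A \<cdot> (lu' A \<cdot> r) = r"
  "A \<in> Obs \<Longrightarrow> r \<in> Ars \<Longrightarrow> cd r = A \<odot> U \<Longrightarrow> \<rho>' A \<cdot> (\<rho> A \<cdot> r) = r"
  "A \<in> Obs \<Longrightarrow> r \<in> Ars \<Longrightarrow> cd r = A \<Longrightarrow> \<rho> A \<cdot> (\<rho>' A \<cdot> r) = r"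
  "A \<in> Obs \<Longrightarrow> B \<in> Obs \<Longrightarrow> r \<in> Ars \<Longrightarrow> cd r = A \<odot> B \<Longrightarrow> \<sigma> B A \<cdot> (\<sigma> A B \<cdot> r) = r"
  by (simp_all del: comp_assoc add: comp_assoc[symmetric])

lemma comp_tensor_idt[simp]: "f \<in> Ars \<Longrightarrow> g \<in> Ars \<Longrightarrow> cd g = dm f \<Longrightarrow> B \<in> Obs \<Longrightarrow>
  (f \<cdot> g) \<otimes> idt B = (f \<otimes> idt B) \<cdot> (g \<otimes> idt B)"
  using interchange[of g f "idt B" "idt B"] by simp
lemma idt_tensor_comp[simp]: "f \<in> Ars \<Longrightarrow> g \<in> Ars \<Longrightarrow> cd g = dm f \<Longrightarrow> B \<in> Obs \<Longrightarrow>
  idt B \<otimes> (f \<cdot> g) = (idt B \<otimes> f) \<cdot> (idt B \<otimes> g)"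
  using interchange[of "idt B" "idt B" g f] by simp

lemma inverse_tensor_idt[simp]:
  "f \<in> Ars \<Longrightarrow> g \<in> Ars \<Longrightarrow> cd g = dm f \<Longrightarrow> B \<in> Obs \<Longrightarrow> f \<cdot> g = idt (dm g) \<Longrightarrow>
    (f \<otimes> idt B) \<cdot> (g \<otimes> idt B) = idt (dm g \<odot> B)"
  using interchange[of g f "idt B" "idt B"] by simp
lemma idt_tensor_inverse[simp]:
  "f \<in> Ars \<Longrightarrow> g \<in> Ars \<Longrightarrow> cd g = dm f \<Longrightarrow> B \<in> Obs \<Longrightarrow> f \<cdot> g = idt (dm g) \<Longrightarrow>
    (idt B \<otimes> f) \<cdot> (idt B \<otimes> g) = idt (B \<odot> dm g)"
  using interchange[of "idt B" "idt B" g f] by simp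
lemma inverse_tensor_idt_cancel[simp]:
  "f \<in> Ars \<Longrightarrow> g \<in> Ars \<Longrightarrow> cd g = dm f \<Longrightarrow> B \<in> Obs \<Longrightarrow> f \<cdot> g = idt (dm g) \<Longrightarrow>
    r \<in> Ars \<Longrightarrow> cd r = dm g \<odot> B \<Longrightarrow> (f \<otimes> idt B) \<cdot> ((g \<otimes> idt B) \<cdot> r) = r"
  using comp_reassoc[OF inverse_tensor_idt, of f g B r] by simp
lemma idt_tensor_inverse_cancel[simp]:
  "f \<in> Ars \<Longrightarrow> g \<in> Ars \<Longrightarrow> cd g = dm f \<Longrightarrow> B \<in> Obs \<Longrightarrow> f \<cdot> g = idt (dm g) \<Longrightarrow>
    r \<in> Ars \<Longrightarrow> cd r = B \<odot> dm g \<Longrightarrow> (idt B \<otimes> f) \<cdot> ((idt B \<otimes> g) \<cdot> r) = r"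
  using comp_reassoc[OF idt_tensor_inverse, of f g B r] by simp

lemma split_epi_cancel: "X \<in> Ars \<Longrightarrow> Y \<in> Ars \<Longrightarrow> P \<in> Ars \<Longrightarrow> Q \<in> Ars \<Longrightarrow>
  cd P = dm X \<Longrightarrow> cd P = dm Y \<Longrightarrow> cd Q = dm P \<Longrightarrow> P \<cdot> Q = idt (cd P) \<Longrightarrow> X \<cdot> P = Y \<cdot> P \<Longrightarrow> X = Y"
  by (metis comp_assoc comp_idt_right)
lemma split_mono_cancel: "X \<in> Ars \<Longrightarrow> Y \<in> Ars \<Longrightarrow> P \<in> Ars \<Longrightarrow> Q \<in> Ars \<Longrightarrow>
  cd X = dm P \<Longrightarrow> cd Y = dm P \<Longrightarrow> cd P = dm Q \<Longrightarrow> Q \<cdot> P = idt (dm P) \<Longrightarrow> P \<cdot> X = P \<cdot> Y \<Longrightarrow> X = Y"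
  by (metis comp_assoc comp_idt_left)

lemma idt_unit_tensor_cancel:
  assumes "f \<in> Ars" "g \<in> Ars" "dm f = dm g" "cd f = cd g" "idt U \<otimes> f = idt U \<otimes> g"
  shows "f = g"
proof -
  have recover: "h = lu (cd h) \<cdot> ((idt U \<otimes> h) \<cdot> lu' (dm h))" if "h \<in> Ars" for h
    using comp_reassoc[OF lunit_nat[OF that], of "lu' (dm h)"] that by simp
  show ?thesis using recover[of f] recover[of g] assms by metis
qed
lemma tensor_idt_unit_cancel:
  assumes "f \<in> Ars" "g \<in> Ars" "dm f = dm g" "cd f = cd g" "f \<otimes> idt U = g \<otimes> idt U"
  shows "f = g"
proof -
  have recover: "h = \<rho> (cd h) \<cdot> ((h \<otimes> idt U) \<cdot> \<rho>' (dm h))" if "h \<in> Ars" for h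
    using comp_reassoc[OF runit_nat[OF that], of "\<rho>' (dm h)"] that by simp
  show ?thesis using recover[of f] recover[of g] assms by metis
qed

text \<open>Kelly's coherence laws: compare the pentagon at U with the triangle, cancel the invertible
  associators and then the faithful functor U \<otimes> - (resp. - \<otimes> U).\<close>

lemma kelly_l: assumes A: "A \<in> Obs" and B: "B \<in> Obs"
  shows "lu (A \<odot> B) \<cdot> \<alpha> U A B = lu A \<otimes> idt B"
proof -
  have pent: "(idt U \<otimes> \<alpha> U A B) \<cdot> (\<alpha> U (U \<odot> A) B \<cdot> (\<alpha> U U A \<otimes> idt B)) = \<alpha> U U (A \<odot> B) \<cdot> \<alpha> (U \<odot> U) A B"
    using pentagon[of U U A B] A B by simp
  have tri1: "(idt U \<otimes> lu (A \<odot> B)) \<cdot> \<alpha> U U (A \<odot> B) = \<rho> U \<otimes> idt (A \<odot> B)"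
    using triangle[of U "A \<odot> B"] A B by simp
  have nat1: "(\<rho> U \<otimes> idt (A \<odot> B)) \<cdot> \<alpha> (U \<odot> U) A B = \<alpha> U A B \<cdot> ((\<rho> U \<otimes> idt A) \<otimes> idt B)"
    using assoc_nat[of "\<rho> U" "idt A" "idt B"] A B by simp
  have tri2: "\<rho> U \<otimes> idt A = (idt U \<otimes> lu A) \<cdot> \<alpha> U U A"
    using triangle[of U A] A by simp
  have nat2: "\<alpha> U A B \<cdot> ((idt U \<otimes> lu A) \<otimes> idt B) = (idt U \<otimes> (lu A \<otimes> idt B)) \<cdot> \<alpha> U (U \<odot> A) B"
    using assoc_nat[of "idt U" "lu A" "idt B"] A B by simp
  have "(idt U \<otimes> (lu (A \<odot> B) \<cdot> \<alpha> U A B)) \<cdot> (\<alpha> U (U \<odot> A) B \<cdot> (\<alpha> U U A \<otimes> idt B))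
     = (idt U \<otimes> lu (A \<odot> B)) \<cdot> (\<alpha> U U (A \<odot> B) \<cdot> \<alpha> (U \<odot> U) A B)"
    using A B by (simp add: pent)
  also have "\<dots> = (\<rho> U \<otimes> idt (A \<odot> B)) \<cdot> \<alpha> (U \<odot> U) A B"
    using A B by (simp add: comp_reassoc[OF tri1] del: tensor_idt)
  also have "\<dots> = \<alpha> U A B \<cdot> ((\<rho> U \<otimes> idt A) \<otimes> idt B)" by (rule nat1)
  also have "\<dots> = \<alpha> U A B \<cdot> (((idt U \<otimes> lu A) \<otimes> idt B) \<cdot> (\<alpha> U U A \<otimes> idt B))"
    using A B by (simp add: tri2)
  also have "\<dots> = (idt U \<otimes> (lu A \<otimes> idt B)) \<cdot> (\<alpha> U (U \<odot> A) B \<cdot> (\<alpha> U U A \<otimes> idt B))"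
    using A B by (simp add: comp_reassoc[OF nat2])
  finally have e: "(idt U \<otimes> (lu (A \<odot> B) \<cdot> \<alpha> U A B)) \<cdot> (\<alpha> U (U \<odot> A) B \<cdot> (\<alpha> U U A \<otimes> idt B))
     = (idt U \<otimes> (lu A \<otimes> idt B)) \<cdot> (\<alpha> U (U \<odot> A) B \<cdot> (\<alpha> U U A \<otimes> idt B))" .
  have "idt U \<otimes> (lu (A \<odot> B) \<cdot> \<alpha> U A B) = idt U \<otimes> (lu A \<otimes> idt B)"
    apply (rule split_epi_cancel[OF _ _ _ _ _ _ _ _ e, where Q = "(\<alpha>' U U A \<otimes> idt B) \<cdot> \<alpha>' U (U \<odot> A) B"])
    using A B by simp_all
  then show ?thesis
    apply (rule idt_unit_tensor_cancel[rotated 4]) using A B by simp_all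
qed

lemma kelly_r: assumes A: "A \<in> Obs" and B: "B \<in> Obs"
  shows "\<rho> (A \<odot> B) = (idt A \<otimes> \<rho> B) \<cdot> \<alpha> A B U"
proof -
  have tri1: "\<rho> (A \<odot> B) \<otimes> idt U = (idt (A \<odot> B) \<otimes> lu U) \<cdot> \<alpha> (A \<odot> B) U U"
    using triangle[of "A \<odot> B" U] A B by simp
  have nat1: "\<alpha> A B U \<cdot> (idt (A \<odot> B) \<otimes> lu U) = (idt A \<otimes> (idt B \<otimes> lu U)) \<cdot> \<alpha> A B (U \<odot> U)"
    using assoc_nat[of "idt A" "idt B" "lu U"] A B by simp
  have pent: "\<alpha> A B (U \<odot> U) \<cdot> \<alpha> (A \<odot> B) U U = (idt A \<otimes> \<alpha> B U U) \<cdot> (\<alpha> A (B \<odot> U) U \<cdot> (\<alpha> A B U \<otimes> idt U))"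
    using pentagon[of A B U U] A B by simp
  have tri2: "(idt A \<otimes> (idt B \<otimes> lu U)) \<cdot> (idt A \<otimes> \<alpha> B U U) = idt A \<otimes> (\<rho> B \<otimes> idt U)"
    using triangle[of B U] A B by (simp add: idt_tensor_comp[symmetric] del: idt_tensor_comp)
  have nat2: "(idt A \<otimes> (\<rho> B \<otimes> idt U)) \<cdot> \<alpha> A (B \<odot> U) U = \<alpha> A B U \<cdot> ((idt A \<otimes> \<rho> B) \<otimes> idt U)"
    using assoc_nat[of "idt A" "\<rho> B" "idt U"] A B by simp
  have "\<alpha> A B U \<cdot> (\<rho> (A \<odot> B) \<otimes> idt U) = \<alpha> A B U \<cdot> ((idt (A \<odot> B) \<otimes> lu U) \<cdot> \<alpha> (A \<odot> B) U U)"
    by (simp add: tri1)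
  also have "\<dots> = (idt A \<otimes> (idt B \<otimes> lu U)) \<cdot> (\<alpha> A B (U \<odot> U) \<cdot> \<alpha> (A \<odot> B) U U)"
    using A B by (simp add: comp_reassoc[OF nat1] del: tensor_idt)
  also have "\<dots> = (idt A \<otimes> (idt B \<otimes> lu U)) \<cdot> ((idt A \<otimes> \<alpha> B U U) \<cdot> (\<alpha> A (B \<odot> U) U \<cdot> (\<alpha> A B U \<otimes> idt U)))"
    by (simp add: pent)
  also have "\<dots> = (idt A \<otimes> (\<rho> B \<otimes> idt U)) \<cdot> (\<alpha> A (B \<odot> U) U \<cdot> (\<alpha> A B U \<otimes> idt U))"
    using A B by (simp add: comp_reassoc[OF tri2] del: tensor_idt)
  also have "\<dots> = \<alpha> A B U \<cdot> (((idt A \<otimes> \<rho> B) \<cdot> \<alpha> A B U) \<otimes> idt U)"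
    using A B by (simp add: comp_reassoc[OF nat2] del: tensor_idt)
  finally have e: "\<alpha> A B U \<cdot> (\<rho> (A \<odot> B) \<otimes> idt U) = \<alpha> A B U \<cdot> (((idt A \<otimes> \<rho> B) \<cdot> \<alpha> A B U) \<otimes> idt U)" .
  have "\<rho> (A \<odot> B) \<otimes> idt U = ((idt A \<otimes> \<rho> B) \<cdot> \<alpha> A B U) \<otimes> idt U"
    apply (rule split_mono_cancel[OF _ _ _ _ _ _ _ _ e, where Q = "\<alpha>' A B U"])
    using A B by (simp_all del: comp_tensor_idt)
  then show ?thesis
    apply (rule tensor_idt_unit_cancel[rotated 4]) using A B by simp_all
qed

lemma assoc_inv_nat: assumes "f \<in> Ars" "g \<in> Ars" "h \<in> Ars"
  shows "\<alpha>' (cd f) (cd g) (cd h) \<cdot> (f \<otimes> (g \<otimes> h)) = ((f \<otimes> g) \<otimes> h) \<cdot> \<alpha>' (dm f) (dm g) (dm h)"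
proof -
  have "\<alpha>' (cd f) (cd g) (cd h) \<cdot> (\<alpha> (cd f) (cd g) (cd h) \<cdot> (((f \<otimes> g) \<otimes> h) \<cdot> \<alpha>' (dm f) (dm g) (dm h)))
     = \<alpha>' (cd f) (cd g) (cd h) \<cdot> ((f \<otimes> (g \<otimes> h)) \<cdot> (\<alpha> (dm f) (dm g) (dm h) \<cdot> \<alpha>' (dm f) (dm g) (dm h)))"
    using assms by (simp add: comp_reassoc[OF assoc_nat])
  then show ?thesis using assms by simp
qed

lemma lunit_inv_nat: assumes "f \<in> Ars" shows "lu' (cd f) \<cdot> f = (idt U \<otimes> f) \<cdot> lu' (dm f)"
proof -
  have "lu' (cd f) \<cdot> (f \<cdot> (lu (dm f) \<cdot> lu' (dm f))) = lu' (cd f) \<cdot> (lu (cd f) \<cdot> ((idt U \<otimes> f) \<cdot> lu' (dm f)))"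
    using assms by (simp add: comp_reassoc[OF lunit_nat])
  then show ?thesis using assms by simp
qed
lemma runit_inv_nat: assumes "f \<in> Ars" shows "\<rho>' (cd f) \<cdot> f = (f \<otimes> idt U) \<cdot> \<rho>' (dm f)"
proof -
  have "\<rho>' (cd f) \<cdot> (f \<cdot> (\<rho> (dm f) \<cdot> \<rho>' (dm f))) = \<rho>' (cd f) \<cdot> (\<rho> (cd f) \<cdot> ((f \<otimes> idt U) \<cdot> \<rho>' (dm f)))"
    using assms by (simp add: comp_reassoc[OF runit_nat])
  then show ?thesis using assms by simp
qed

lemma triangle_inv: assumes A: "A \<in> Obs" and B: "B \<in> Obs"
  shows "\<alpha>' A U B \<cdot> (idt A \<otimes> lu' B) = \<rho>' A \<otimes> idt B"
proof -
  have "(\<rho>' A \<otimes> idt B) \<cdot> ((\<rho> A \<otimes> idt B) \<cdot> (\<alpha>' A U B \<cdot> (idt A \<otimes> lu' B))) = \<rho>' A \<otimes> idt B"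
    using A B by (simp add: triangle[symmetric])
  then show ?thesis using A B by simp
qed

lemma kelly_l_inv: assumes A: "A \<in> Obs" and B: "B \<in> Obs"
  shows "\<alpha>' U A B \<cdot> lu' (A \<odot> B) = lu' A \<otimes> idt B"
proof -
  have "(lu' A \<otimes> idt B) \<cdot> ((lu A \<otimes> idt B) \<cdot> (\<alpha>' U A B \<cdot> lu' (A \<odot> B))) = lu' A \<otimes> idt B"
    using A B by (simp add: kelly_l[symmetric])
  then show ?thesis using A B by simp
qed

lemma kelly_r_inv: assumes A: "A \<in> Obs" and B: "B \<in> Obs"
  shows "\<rho>' (A \<odot> B) = \<alpha>' A B U \<cdot> (idt A \<otimes> \<rho>' B)"
proof -
  have "\<rho>' (A \<odot> B) \<cdot> ((idt A \<otimes> \<rho> B) \<cdot> (\<alpha> A B U \<cdot> (\<alpha>' A B U \<cdot> (idt A \<otimes> \<rho>' B))))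
      = \<rho>' (A \<odot> B) \<cdot> (\<rho> (A \<odot> B) \<cdot> (\<alpha>' A B U \<cdot> (idt A \<otimes> \<rho>' B)))"
    using A B by (simp add: kelly_r)
  then show ?thesis using A B by simp
qed

lemma triangle_runit_inv:
  assumes "A \<in> Obs" "B \<in> Obs"
  shows "\<alpha> A U B \<cdot> (\<rho>' A \<otimes> idt B) = idt A \<otimes> lu' B"
  using arg_cong[OF triangle[of A B], of "\<lambda>h. (idt A \<otimes> lu' B) \<cdot> (h \<cdot> (\<rho>' A \<otimes> idt B))"] assms by simp
lemma triangle_assoc_inv:
  assumes "A \<in> Obs" "B \<in> Obs"
  shows "(\<rho> A \<otimes> idt B) \<cdot> \<alpha>' A U B = idt A \<otimes> lu B"
  using arg_cong[OF triangle[of A B], of "\<lambda>h. h \<cdot> \<alpha>' A U B"] assms by simp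

lemma pentagon_alt1:
  assumes "A \<in> Obs" "B \<in> Obs" "D \<in> Obs" "E \<in> Obs"
  shows "\<alpha>' A B (D \<odot> E) \<cdot> (idt A \<otimes> \<alpha> B D E)
     = \<alpha> (A \<odot> B) D E \<cdot> ((\<alpha>' A B D \<otimes> idt E) \<cdot> \<alpha>' A (B \<odot> D) E)"
  using comp_reassoc3[OF pentagon[of A B D E], of "(\<alpha>' A B D \<otimes> idt E) \<cdot> \<alpha>' A (B \<odot> D) E"] assms
  by simp
lemma pentagon_alt2:
  assumes "A \<in> Obs" "B \<in> Obs" "D \<in> Obs" "E \<in> Obs"
  shows "(idt A \<otimes> \<alpha>' B D E) \<cdot> \<alpha> A B (D \<odot> E)
     = \<alpha> A (B \<odot> D) E \<cdot> ((\<alpha> A B D \<otimes> idt E) \<cdot> \<alpha>' (A \<odot> B) D E)"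
  using arg_cong[OF pentagon[of A B D E],
      of "\<lambda>h. (idt A \<otimes> \<alpha>' B D E) \<cdot> (h \<cdot> \<alpha>' (A \<odot> B) D E)"] assms
  by simp
lemma pentagon_alt3:
  assumes "A \<in> Obs" "B \<in> Obs" "D \<in> Obs" "E \<in> Obs"
  shows "(\<alpha> A B D \<otimes> idt E) \<cdot> (\<alpha>' (A \<odot> B) D E \<cdot> \<alpha>' A B (D \<odot> E))
     = \<alpha>' A (B \<odot> D) E \<cdot> (idt A \<otimes> \<alpha>' B D E)"
  using arg_cong[OF pentagon[of A B D E],
      of "\<lambda>k. \<alpha>' A (B \<odot> D) E \<cdot> ((idt A \<otimes> \<alpha>' B D E) \<cdot> (k \<cdot> (\<alpha>' (A \<odot> B) D E \<cdot> \<alpha>' A B (D \<odot> E))))"] assms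
  by simp

definition luncurry :: "'o \<Rightarrow> 'o \<Rightarrow> 'a \<Rightarrow> 'a" where
  "luncurry A Z f = lu Z \<cdot> ((\<epsilon> A \<otimes> idt Z) \<cdot> (\<alpha>' A (ds A) Z \<cdot> (idt A \<otimes> f)))"
definition lcurry :: "'o \<Rightarrow> 'o \<Rightarrow> 'a \<Rightarrow> 'a" where
  "lcurry A X g = (idt (ds A) \<otimes> g) \<cdot> (\<alpha> (ds A) A X \<cdot> ((\<eta> A \<otimes> idt X) \<cdot> lu' X))"
definition runcurry :: "'o \<Rightarrow> 'o \<Rightarrow> 'a \<Rightarrow> 'a" where
  "runcurry A Z f = \<rho> Z \<cdot> ((idt Z \<otimes> \<epsilon> A) \<cdot> (\<alpha> Z A (ds A) \<cdot> (f \<otimes> idt (ds A))))"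
definition rcurry :: "'o \<Rightarrow> 'o \<Rightarrow> 'a \<Rightarrow> 'a" where
  "rcurry A Y h = (h \<otimes> idt A) \<cdot> (\<alpha>' Y (ds A) A \<cdot> ((idt Y \<otimes> \<eta> A) \<cdot> \<rho>' Y))"

lemma luncurry_typing[simp]: "A \<in> Obs \<Longrightarrow> Z \<in> Obs \<Longrightarrow> f \<in> Ars \<Longrightarrow> cd f = ds A \<odot> Z \<Longrightarrow>
   luncurry A Z f \<in> Ars \<and> dm (luncurry A Z f) = A \<odot> dm f \<and> cd (luncurry A Z f) = Z"
  unfolding luncurry_def by simp
lemma lcurry_typing[simp]: "A \<in> Obs \<Longrightarrow> X \<in> Obs \<Longrightarrow> g \<in> Ars \<Longrightarrow> dm g = A \<odot> X \<Longrightarrow>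
   lcurry A X g \<in> Ars \<and> dm (lcurry A X g) = X \<and> cd (lcurry A X g) = ds A \<odot> cd g"
  unfolding lcurry_def by simp
lemma runcurry_typing[simp]: "A \<in> Obs \<Longrightarrow> Z \<in> Obs \<Longrightarrow> f \<in> Ars \<Longrightarrow> cd f = Z \<odot> A \<Longrightarrow>
   runcurry A Z f \<in> Ars \<and> dm (runcurry A Z f) = dm f \<odot> ds A \<and> cd (runcurry A Z f) = Z"
  unfolding runcurry_def by simp
lemma rcurry_typing[simp]: "A \<in> Obs \<Longrightarrow> Y \<in> Obs \<Longrightarrow> h \<in> Ars \<Longrightarrow> dm h = Y \<odot> ds A \<Longrightarrow>
   rcurry A Y h \<in> Ars \<and> dm (rcurry A Y h) = Y \<and> cd (rcurry A Y h) = cd h \<odot> A"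
  unfolding rcurry_def by simp

lemma luncurry_lcurry: assumes A: "A \<in> Obs" and X: "X \<in> Obs" and Z: "Z \<in> Obs"
  and g: "g \<in> Ars" "dm g = A \<odot> X" "cd g = Z"
  shows "luncurry A Z (lcurry A X g) = g"
proof -
  have n1: "\<alpha>' A (ds A) Z \<cdot> (idt A \<otimes> (idt (ds A) \<otimes> g)) = (idt (A \<odot> ds A) \<otimes> g) \<cdot> \<alpha>' A (ds A) (A \<odot> X)"
    using assoc_inv_nat[of "idt A" "idt (ds A)" g] A X Z g by simp
  have n2: "(\<epsilon> A \<otimes> idt Z) \<cdot> (idt (A \<odot> ds A) \<otimes> g) = (idt U \<otimes> g) \<cdot> (\<epsilon> A \<otimes> idt (A \<odot> X))"
    using interchange[of "idt (A \<odot> ds A)" "\<epsilon> A" g "idt Z"] interchange[of "\<epsilon> A" "idt U" "idt (A \<odot> X)" g] A X Z g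
    by simp
  have n3: "lu Z \<cdot> (idt U \<otimes> g) = g \<cdot> lu (A \<odot> X)"
    using lunit_nat[of g] A X Z g by simp
  have p2: "\<alpha>' A (ds A \<odot> A) X \<cdot> (idt A \<otimes> (\<eta> A \<otimes> idt X)) = ((idt A \<otimes> \<eta> A) \<otimes> idt X) \<cdot> \<alpha>' A U X"
    using assoc_inv_nat[of "idt A" "\<eta> A" "idt X"] A X by simp
  have p4: "(\<epsilon> A \<otimes> idt (A \<odot> X)) \<cdot> \<alpha> (A \<odot> ds A) A X = \<alpha> U A X \<cdot> ((\<epsilon> A \<otimes> idt A) \<otimes> idt X)"
    using assoc_nat[of "\<epsilon> A" "idt A" "idt X"] A X by simp
  have p6: "(lu A \<otimes> idt X) \<cdot> (((\<epsilon> A \<otimes> idt A) \<otimes> idt X) \<cdot> ((\<alpha>' A (ds A) A \<otimes> idt X) \<cdot> (((idt A \<otimes> \<eta> A) \<otimes> idt X) \<cdot> (\<rho>' A \<otimes> idt X)))) = idt (A \<odot> X)"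
    using arg_cong[OF yanking[OF A], of "\<lambda>h. h \<otimes> idt X"] A X by simp
  show ?thesis unfolding luncurry_def lcurry_def
    using A X Z g by (simp add: comp_reassoc[OF n1] comp_reassoc[OF n2] comp_reassoc[OF n3] comp_reassoc[OF pentagon_alt1] comp_reassoc[OF p2] triangle_inv
       comp_reassoc[OF p4] comp_reassoc[OF kelly_l] p6)
qed

lemma lcurry_luncurry: assumes A: "A \<in> Obs" and X: "X \<in> Obs" and Z: "Z \<in> Obs"
  and f: "f \<in> Ars" "dm f = X" "cd f = ds A \<odot> Z"
  shows "lcurry A X (luncurry A Z f) = f"
proof -
  have q1: "(idt (ds A) \<otimes> (idt A \<otimes> f)) \<cdot> \<alpha> (ds A) A X = \<alpha> (ds A) A (ds A \<odot> Z) \<cdot> (idt (ds A \<odot> A) \<otimes> f)"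
    using assoc_nat[of "idt (ds A)" "idt A" f] A X Z f by simp
  have q2: "(idt (ds A \<odot> A) \<otimes> f) \<cdot> (\<eta> A \<otimes> idt X) = (\<eta> A \<otimes> idt (ds A \<odot> Z)) \<cdot> (idt U \<otimes> f)"
    using interchange[of "\<eta> A" "idt (ds A \<odot> A)" "idt X" f] interchange[of "idt U" "\<eta> A" f "idt (ds A \<odot> Z)"] A X Z f
    by simp
  have q3: "(idt U \<otimes> f) \<cdot> lu' X = lu' (ds A \<odot> Z) \<cdot> f"
    using lunit_inv_nat[of f] A X Z f by simp
  have r2: "\<alpha>' (ds A \<odot> A) (ds A) Z \<cdot> (\<eta> A \<otimes> idt (ds A \<odot> Z)) = ((\<eta> A \<otimes> idt (ds A)) \<otimes> idt Z) \<cdot> \<alpha>' U (ds A) Z"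
    using assoc_inv_nat[of "\<eta> A" "idt (ds A)" "idt Z"] A Z by simp
  have r4: "(idt (ds A) \<otimes> (\<epsilon> A \<otimes> idt Z)) \<cdot> \<alpha> (ds A) (A \<odot> ds A) Z = \<alpha> (ds A) U Z \<cdot> ((idt (ds A) \<otimes> \<epsilon> A) \<otimes> idt Z)"
    using assoc_nat[of "idt (ds A)" "\<epsilon> A" "idt Z"] A Z by simp
  have r6: "(\<rho> (ds A) \<otimes> idt Z) \<cdot> (((idt (ds A) \<otimes> \<epsilon> A) \<otimes> idt Z) \<cdot> ((\<alpha> (ds A) A (ds A) \<otimes> idt Z) \<cdot> (((\<eta> A \<otimes> idt (ds A)) \<otimes> idt Z) \<cdot> (lu' (ds A) \<otimes> idt Z)))) = idt (ds A \<odot> Z)"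
    using arg_cong[OF yanking_dual[OF A], of "\<lambda>h. h \<otimes> idt Z"] A Z by simp
  show ?thesis unfolding luncurry_def lcurry_def
    using A X Z f by (simp add: comp_reassoc[OF q1] comp_reassoc[OF q2] q3 comp_reassoc[OF pentagon_alt2] comp_reassoc[OF r2] comp_reassoc[OF kelly_l_inv]
       comp_reassoc[OF r4] comp_reassoc[OF triangle] comp_reassoc5[OF r6])
qed

lemma runcurry_rcurry: assumes A: "A \<in> Obs" and Y: "Y \<in> Obs" and Z: "Z \<in> Obs"
  and h: "h \<in> Ars" "dm h = Y \<odot> ds A" "cd h = Z"
  shows "runcurry A Z (rcurry A Y h) = h"
proof -
  have s1: "\<alpha> Z A (ds A) \<cdot> ((h \<otimes> idt A) \<otimes> idt (ds A)) = (h \<otimes> idt (A \<odot> ds A)) \<cdot> \<alpha> (Y \<odot> ds A) A (ds A)"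
    using assoc_nat[of h "idt A" "idt (ds A)"] A Y Z h by simp
  have s2: "(idt Z \<otimes> \<epsilon> A) \<cdot> (h \<otimes> idt (A \<odot> ds A)) = (h \<otimes> idt U) \<cdot> (idt (Y \<odot> ds A) \<otimes> \<epsilon> A)"
    using interchange[of h "idt Z" "idt (A \<odot> ds A)" "\<epsilon> A"] interchange[of "idt (Y \<odot> ds A)" h "\<epsilon> A" "idt U"] A Y Z h
    by simp
  have s3: "\<rho> Z \<cdot> (h \<otimes> idt U) = h \<cdot> \<rho> (Y \<odot> ds A)"
    using runit_nat[of h] A Y Z h by simp
  have t1: "\<rho> (Y \<odot> ds A) = (idt Y \<otimes> \<rho> (ds A)) \<cdot> \<alpha> Y (ds A) U"
    using kelly_r A Y by simp
  have t2: "\<alpha> Y (ds A) U \<cdot> (idt (Y \<odot> ds A) \<otimes> \<epsilon> A) = (idt Y \<otimes> (idt (ds A) \<otimes> \<epsilon> A)) \<cdot> \<alpha> Y (ds A) (A \<odot> ds A)"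
    using assoc_nat[of "idt Y" "idt (ds A)" "\<epsilon> A"] A Y by simp
  have t3: "\<alpha> Y (ds A) (A \<odot> ds A) \<cdot> (\<alpha> (Y \<odot> ds A) A (ds A) \<cdot> (\<alpha>' Y (ds A) A \<otimes> idt (ds A)))
     = (idt Y \<otimes> \<alpha> (ds A) A (ds A)) \<cdot> \<alpha> Y (ds A \<odot> A) (ds A)"
    using arg_cong[OF pentagon[of Y "ds A" A "ds A"], of "\<lambda>k. k \<cdot> (\<alpha>' Y (ds A) A \<otimes> idt (ds A))"] A Y by simp
  have t4: "\<alpha> Y (ds A \<odot> A) (ds A) \<cdot> ((idt Y \<otimes> \<eta> A) \<otimes> idt (ds A)) = (idt Y \<otimes> (\<eta> A \<otimes> idt (ds A))) \<cdot> \<alpha> Y U (ds A)"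
    using assoc_nat[of "idt Y" "\<eta> A" "idt (ds A)"] A Y by simp
  have t6: "(idt Y \<otimes> \<rho> (ds A)) \<cdot> ((idt Y \<otimes> (idt (ds A) \<otimes> \<epsilon> A)) \<cdot> ((idt Y \<otimes> \<alpha> (ds A) A (ds A)) \<cdot> ((idt Y \<otimes> (\<eta> A \<otimes> idt (ds A))) \<cdot> (idt Y \<otimes> lu' (ds A))))) = idt (Y \<odot> ds A)"
    using arg_cong[OF yanking_dual[OF A], of "\<lambda>k. idt Y \<otimes> k"] A Y by simp
  show ?thesis unfolding runcurry_def rcurry_def
    using A Y Z h by (simp add: comp_reassoc[OF s1] comp_reassoc[OF s2] comp_reassoc[OF s3] t1 comp_reassoc[OF t2] comp_reassoc3[OF t3] comp_reassoc[OF t4]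
      triangle_runit_inv[OF Y] t6)
qed

lemma rcurry_runcurry: assumes A: "A \<in> Obs" and Y: "Y \<in> Obs" and Z: "Z \<in> Obs"
  and f: "f \<in> Ars" "dm f = Y" "cd f = Z \<odot> A"
  shows "rcurry A Y (runcurry A Z f) = f"
proof -
  have u1: "((f \<otimes> idt (ds A)) \<otimes> idt A) \<cdot> \<alpha>' Y (ds A) A = \<alpha>' (Z \<odot> A) (ds A) A \<cdot> (f \<otimes> idt (ds A \<odot> A))"
    using assoc_inv_nat[of f "idt (ds A)" "idt A"] A Y Z f by simp
  have u2: "(f \<otimes> idt (ds A \<odot> A)) \<cdot> (idt Y \<otimes> \<eta> A) = (idt (Z \<odot> A) \<otimes> \<eta> A) \<cdot> (f \<otimes> idt U)"
    using interchange[of "idt Y" f "\<eta> A" "idt (ds A \<odot> A)"] interchange[of f "idt (Z \<odot> A)" "idt U" "\<eta> A"] A Y Z f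
    by simp
  have u3: "(f \<otimes> idt U) \<cdot> \<rho>' Y = \<rho>' (Z \<odot> A) \<cdot> f"
    using runit_inv_nat[of f] A Y Z f by simp
  have v1: "\<rho>' (Z \<odot> A) = \<alpha>' Z A U \<cdot> (idt Z \<otimes> \<rho>' A)"
    using kelly_r_inv A Z by simp
  have v2: "(idt (Z \<odot> A) \<otimes> \<eta> A) \<cdot> \<alpha>' Z A U = \<alpha>' Z A (ds A \<odot> A) \<cdot> (idt Z \<otimes> (idt A \<otimes> \<eta> A))"
    using assoc_inv_nat[of "idt Z" "idt A" "\<eta> A"] A Z by simp
  have v4: "((idt Z \<otimes> \<epsilon> A) \<otimes> idt A) \<cdot> \<alpha>' Z (A \<odot> ds A) A = \<alpha>' Z U A \<cdot> (idt Z \<otimes> (\<epsilon> A \<otimes> idt A))"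
    using assoc_inv_nat[of "idt Z" "\<epsilon> A" "idt A"] A Z by simp
  have v6: "(idt Z \<otimes> lu A) \<cdot> ((idt Z \<otimes> (\<epsilon> A \<otimes> idt A)) \<cdot> ((idt Z \<otimes> \<alpha>' A (ds A) A) \<cdot> ((idt Z \<otimes> (idt A \<otimes> \<eta> A)) \<cdot> (idt Z \<otimes> \<rho>' A)))) = idt (Z \<odot> A)"
    using arg_cong[OF yanking[OF A], of "\<lambda>k. idt Z \<otimes> k"] A Z by simp
  show ?thesis unfolding runcurry_def rcurry_def
    using A Y Z f by (simp add: comp_reassoc[OF u1] comp_reassoc[OF u2] u3 v1 comp_reassoc[OF v2] comp_reassoc3[OF pentagon_alt3] comp_reassoc[OF v4]
      comp_reassoc[OF triangle_assoc_inv[OF Z A]] comp_reassoc5[OF v6])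
qed

lemma luncurry_comp: "A \<in> Obs \<Longrightarrow> Z \<in> Obs \<Longrightarrow> f \<in> Ars \<Longrightarrow> cd f = ds A \<odot> Z \<Longrightarrow> k \<in> Ars \<Longrightarrow> cd k = dm f \<Longrightarrow>
  luncurry A Z (f \<cdot> k) = luncurry A Z f \<cdot> (idt A \<otimes> k)"
  unfolding luncurry_def by simp

lemma lcurry_comp: assumes A: "A \<in> Obs" and X: "X \<in> Obs" and g: "g \<in> Ars" "dm g = A \<odot> X"
  and k: "k \<in> Ars" "cd k = X"
  shows "lcurry A (dm k) (g \<cdot> (idt A \<otimes> k)) = lcurry A X g \<cdot> k"
proof -
  have w1: "(idt (ds A) \<otimes> (idt A \<otimes> k)) \<cdot> \<alpha> (ds A) A (dm k) = \<alpha> (ds A) A X \<cdot> (idt (ds A \<odot> A) \<otimes> k)"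
    using assoc_nat[of "idt (ds A)" "idt A" k] A X k by simp
  have w2: "(idt (ds A \<odot> A) \<otimes> k) \<cdot> (\<eta> A \<otimes> idt (dm k)) = (\<eta> A \<otimes> idt X) \<cdot> (idt U \<otimes> k)"
    using interchange[of "\<eta> A" "idt (ds A \<odot> A)" "idt (dm k)" k] interchange[of "idt U" "\<eta> A" k "idt X"] A X k
    by simp
  have w3: "(idt U \<otimes> k) \<cdot> lu' (dm k) = lu' X \<cdot> k"
    using lunit_inv_nat[of k] k by simp
  show ?thesis unfolding lcurry_def using A X g k by (simp add: comp_reassoc[OF w1] comp_reassoc[OF w2] w3)
qed

lemma rcurry_comp: assumes A: "A \<in> Obs" and Y: "Y \<in> Obs" and h: "h \<in> Ars" "dm h = Y \<odot> ds A"
  and k: "k \<in> Ars" "cd k = Y"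
  shows "rcurry A (dm k) (h \<cdot> (k \<otimes> idt (ds A))) = rcurry A Y h \<cdot> k"
proof -
  have w1: "((k \<otimes> idt (ds A)) \<otimes> idt A) \<cdot> \<alpha>' (dm k) (ds A) A = \<alpha>' Y (ds A) A \<cdot> (k \<otimes> idt (ds A \<odot> A))"
    using assoc_inv_nat[of k "idt (ds A)" "idt A"] A Y k by simp
  have w2: "(k \<otimes> idt (ds A \<odot> A)) \<cdot> (idt (dm k) \<otimes> \<eta> A) = (idt Y \<otimes> \<eta> A) \<cdot> (k \<otimes> idt U)"
    using interchange[of "idt (dm k)" k "\<eta> A" "idt (ds A \<odot> A)"] interchange[of k "idt Y" "idt U" "\<eta> A"] A Y k
    by simp
  have w3: "(k \<otimes> idt U) \<cdot> \<rho>' (dm k) = \<rho>' Y \<cdot> k"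
    using runit_inv_nat[of k] k by simp
  show ?thesis unfolding rcurry_def using A Y h k by (simp add: comp_reassoc[OF w1] comp_reassoc[OF w2] w3)
qed

lemma isomorphic_refl: "A \<in> Obs \<Longrightarrow> isomorphic C A A"
  unfolding isomorphic_def hom_def by (intro exI[of _ "idt A"]) simp

lemma isomorphic_sym: "isomorphic C A B \<Longrightarrow> isomorphic C B A"
  unfolding isomorphic_def by blast

lemma isomorphic_trans:
  assumes "isomorphic C A B" and "isomorphic C B D"
  shows "isomorphic C A D"
proof -
  obtain f g where f: "f \<in> Ars" "dm f = A" "cd f = B" and g: "g \<in> Ars" "dm g = B" "cd g = A"
    and gf: "g \<cdot> f = idt A" and fg: "f \<cdot> g = idt B"
    using assms(1) unfolding isomorphic_def hom_def by blast
  obtain f' g' where f': "f' \<in> Ars" "dm f' = B" "cd f' = D" and g': "g' \<in> Ars" "dm g' = D" "cd g' = B"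
    and gf': "g' \<cdot> f' = idt B" and fg': "f' \<cdot> g' = idt D"
    using assms(2) unfolding isomorphic_def hom_def by blast
  have "(g \<cdot> g') \<cdot> (f' \<cdot> f) = idt A"
    using f g f' g' gf by (simp add: comp_reassoc[OF gf'])
  moreover have "(f' \<cdot> f) \<cdot> (g \<cdot> g') = idt D"
    using f g f' g' fg' by (simp add: comp_reassoc[OF fg])
  ultimately show ?thesis
    unfolding isomorphic_def hom_def using f g f' g' by (intro exI[of _ "f' \<cdot> f"] exI[of _ "g \<cdot> g'"]) simp
qed

lemma isomorphic_tensor:
  assumes "isomorphic C A A'" and "isomorphic C B B'"
  shows "isomorphic C (A \<odot> B) (A' \<odot> B')"
proof -
  obtain f g where f: "f \<in> Ars" "dm f = A" "cd f = A'" and g: "g \<in> Ars" "dm g = A'" "cd g = A"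
    and gf: "g \<cdot> f = idt A" and fg: "f \<cdot> g = idt A'"
    using assms(1) unfolding isomorphic_def hom_def by blast
  obtain f' g' where f': "f' \<in> Ars" "dm f' = B" "cd f' = B'" and g': "g' \<in> Ars" "dm g' = B'" "cd g' = B"
    and gf': "g' \<cdot> f' = idt B" and fg': "f' \<cdot> g' = idt B'"
    using assms(2) unfolding isomorphic_def hom_def by blast
  have "A \<in> Obs" "B \<in> Obs" "A' \<in> Obs" "B' \<in> Obs" using f f' dom_ob cod_ob by blast+
  have "(g \<otimes> g') \<cdot> (f \<otimes> f') = idt (A \<odot> B)"
    using \<open>A \<in> Obs\<close> \<open>B \<in> Obs\<close> f g f' g' gf gf' interchange[of f g f' g'] by simp
  moreover have "(f \<otimes> f') \<cdot> (g \<otimes> g') = idt (A' \<odot> B')"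
    using \<open>A' \<in> Obs\<close> \<open>B' \<in> Obs\<close> f g f' g' fg fg' interchange[of g f g' f'] by simp
  ultimately show ?thesis
    unfolding isomorphic_def hom_def using f g f' g' by (intro exI[of _ "f \<otimes> f'"] exI[of _ "g \<otimes> g'"]) simp
qed

text \<open>An instance of the Yoneda lemma; naturality of the inverse bijection is automatic.\<close>

lemma isomorphic_if_natural_bijection:
  fixes \<Phi> \<Psi> :: "'o \<Rightarrow> 'a \<Rightarrow> 'a"
  assumes A: "A \<in> Obs" and B: "B \<in> Obs"
    and \<Phi>_hom: "\<And>X f. f \<in> hom C X A \<Longrightarrow> \<Phi> X f \<in> hom C X B"
    and \<Psi>_hom: "\<And>X g. g \<in> hom C X B \<Longrightarrow> \<Psi> X g \<in> hom C X A"
    and \<Psi>_\<Phi>: "\<And>X f. f \<in> hom C X A \<Longrightarrow> \<Psi> X (\<Phi> X f) = f"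
    and \<Phi>_\<Psi>: "\<And>X g. g \<in> hom C X B \<Longrightarrow> \<Phi> X (\<Psi> X g) = g"
    and \<Phi>_nat: "\<And>X Y f k. f \<in> hom C X A \<Longrightarrow> k \<in> hom C Y X \<Longrightarrow> \<Phi> Y (f \<cdot> k) = \<Phi> X f \<cdot> k"
  shows "isomorphic C A B"
proof -
  define u where "u = \<Phi> A (idt A)"
  define v where "v = \<Psi> B (idt B)"
  have idA: "idt A \<in> hom C A A" and idB: "idt B \<in> hom C B B"
    using A B unfolding hom_def by simp_all
  have u: "u \<in> hom C A B" using \<Phi>_hom[OF idA] unfolding u_def .
  have v: "v \<in> hom C B A" using \<Psi>_hom[OF idB] unfolding v_def .
  have "u \<cdot> v = \<Phi> B (idt A \<cdot> v)" using \<Phi>_nat[OF idA v] unfolding u_def by simp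
  also have "\<dots> = idt B" using v \<Phi>_\<Psi>[OF idB] unfolding v_def hom_def by simp
  finally have uv: "u \<cdot> v = idt B" .
  have vu_hom: "v \<cdot> u \<in> hom C A A" using u v unfolding hom_def by simp
  have "\<Phi> A (v \<cdot> u) = \<Phi> B v \<cdot> u" using \<Phi>_nat[OF v u] .
  also have "\<dots> = \<Phi> A (idt A)" using u \<Phi>_\<Psi>[OF idB] unfolding u_def v_def hom_def by simp
  finally have "\<Psi> A (\<Phi> A (v \<cdot> u)) = \<Psi> A (\<Phi> A (idt A))" by simp
  then have vu: "v \<cdot> u = idt A" using \<Psi>_\<Phi>[OF vu_hom] \<Psi>_\<Phi>[OF idA] by simp
  show ?thesis unfolding isomorphic_def using u v uv vu by blast
qed

end

locale reflexive_object = compact_closed_cat C for C :: "('o,'a,'x) cc_data_scheme" +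
  fixes R app lam
  assumes R[simp]: "R \<in> Ob C"
    and app[simp]: "app \<in> Ar C" "cdom C app = R" "ccod C app = tens_ob C (dual C R) R"
    and lam[simp]: "lam \<in> Ar C" "cdom C lam = tens_ob C (dual C R) R" "ccod C lam = R"
    and lam_app[simp]: "cmp C lam app = ident C R"
    and app_lam[simp]: "cmp C app lam = ident C (tens_ob C (dual C R) R)"
begin

lemma lam_app_cancel[simp]: "r \<in> Ars \<Longrightarrow> cd r = R \<Longrightarrow> lam \<cdot> (app \<cdot> r) = r"
  using comp_reassoc[OF lam_app, of r] by simp
lemma app_lam_cancel[simp]: "r \<in> Ars \<Longrightarrow> cd r = ds R \<odot> R \<Longrightarrow> app \<cdot> (lam \<cdot> r) = r"
  using comp_reassoc[OF app_lam, of r] by simp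

text \<open>The isomorphism (R \<otimes> X) \<otimes> R* \<cong> (R* \<otimes> R) \<otimes> X \<cong> R \<otimes> X of the proof idea.\<close>

definition absorb :: "'o \<Rightarrow> 'a" where
  "absorb X = (lam \<otimes> idt X) \<cdot> (\<alpha>' (ds R) R X \<cdot> \<sigma> (R \<odot> X) (ds R))"
definition absorb_inv :: "'o \<Rightarrow> 'a" where
  "absorb_inv X = \<sigma> (ds R) (R \<odot> X) \<cdot> (\<alpha> (ds R) R X \<cdot> (app \<otimes> idt X))"

lemma absorb_typing[simp]:
  "X \<in> Obs \<Longrightarrow> absorb X \<in> Ars \<and> dm (absorb X) = (R \<odot> X) \<odot> ds R \<and> cd (absorb X) = R \<odot> X"
  unfolding absorb_def by simp
lemma absorb_inv_typing[simp]:
  "X \<in> Obs \<Longrightarrow> absorb_inv X \<in> Ars \<and> dm (absorb_inv X) = R \<odot> X \<and> cd (absorb_inv X) = (R \<odot> X) \<odot> ds R"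
  unfolding absorb_inv_def by simp
lemma absorb_absorb_inv[simp]: "X \<in> Obs \<Longrightarrow> absorb X \<cdot> absorb_inv X = idt (R \<odot> X)"
  unfolding absorb_def absorb_inv_def by simp
lemma absorb_inv_absorb[simp]: "X \<in> Obs \<Longrightarrow> absorb_inv X \<cdot> absorb X = idt ((R \<odot> X) \<odot> ds R)"
  unfolding absorb_def absorb_inv_def by simp

lemma absorb_nat:
  assumes k: "k \<in> Ars" "cd k = X"
  shows "absorb X \<cdot> ((idt R \<otimes> k) \<otimes> idt (ds R)) = (idt R \<otimes> k) \<cdot> absorb (dm k)"
proof -
  have X: "X \<in> Obs" using k cod_ob by blast
  have symm: "\<sigma> (R \<odot> X) (ds R) \<cdot> ((idt R \<otimes> k) \<otimes> idt (ds R))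
      = (idt (ds R) \<otimes> (idt R \<otimes> k)) \<cdot> \<sigma> (R \<odot> dm k) (ds R)"
    using symm_nat[of "idt R \<otimes> k" "idt (ds R)"] X k by simp
  have assoc: "\<alpha>' (ds R) R X \<cdot> (idt (ds R) \<otimes> (idt R \<otimes> k)) = (idt (ds R \<odot> R) \<otimes> k) \<cdot> \<alpha>' (ds R) R (dm k)"
    using assoc_inv_nat[of "idt (ds R)" "idt R" k] X k by simp
  have lam: "(lam \<otimes> idt X) \<cdot> (idt (ds R \<odot> R) \<otimes> k) = (idt R \<otimes> k) \<cdot> (lam \<otimes> idt (dm k))"
    using interchange[of "idt (ds R \<odot> R)" lam k "idt X"] interchange[of lam "idt R" "idt (dm k)" k] X k
    by simp
  show ?thesis unfolding absorb_def
    using X k by (simp add: symm comp_reassoc[OF symm] comp_reassoc[OF assoc] comp_reassoc[OF lam])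
qed

text \<open>The bijection hom(X, R*) \<cong> hom(X, R) of the proof idea and its inverse.\<close>

definition dual_to_self :: "'o \<Rightarrow> 'a \<Rightarrow> 'a" where
  "dual_to_self X f =
     lam \<cdot> lcurry R X (lu R \<cdot> rcurry R (R \<odot> X) (luncurry R U (\<rho>' (ds R) \<cdot> f) \<cdot> absorb X))"
definition self_to_dual :: "'o \<Rightarrow> 'a \<Rightarrow> 'a" where
  "self_to_dual X g =
     \<rho> (ds R) \<cdot> lcurry R X (runcurry R U (lu' R \<cdot> luncurry R R (app \<cdot> g)) \<cdot> absorb_inv X)"

lemma dual_to_self_typing[simp]: "X \<in> Obs \<Longrightarrow> f \<in> Ars \<Longrightarrow> dm f = X \<Longrightarrow> cd f = ds R \<Longrightarrow>
  dual_to_self X f \<in> Ars \<and> dm (dual_to_self X f) = X \<and> cd (dual_to_self X f) = R"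
  unfolding dual_to_self_def by simp
lemma self_to_dual_typing[simp]: "X \<in> Obs \<Longrightarrow> g \<in> Ars \<Longrightarrow> dm g = X \<Longrightarrow> cd g = R \<Longrightarrow>
  self_to_dual X g \<in> Ars \<and> dm (self_to_dual X g) = X \<and> cd (self_to_dual X g) = ds R"
  unfolding self_to_dual_def by simp

lemma self_to_dual_dual_to_self:
  "X \<in> Obs \<Longrightarrow> f \<in> Ars \<Longrightarrow> dm f = X \<Longrightarrow> cd f = ds R \<Longrightarrow> self_to_dual X (dual_to_self X f) = f"
  unfolding self_to_dual_def dual_to_self_def
  by (simp add: luncurry_lcurry runcurry_rcurry lcurry_luncurry)

lemma dual_to_self_self_to_dual:
  "X \<in> Obs \<Longrightarrow> g \<in> Ars \<Longrightarrow> dm g = X \<Longrightarrow> cd g = R \<Longrightarrow> dual_to_self X (self_to_dual X g) = g"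
  unfolding self_to_dual_def dual_to_self_def
  by (simp add: luncurry_lcurry rcurry_runcurry lcurry_luncurry)

lemma dual_to_self_comp:
  assumes X: "X \<in> Obs" and f: "f \<in> Ars" "dm f = X" "cd f = ds R" and k: "k \<in> Ars" "cd k = X"
  shows "dual_to_self (dm k) (f \<cdot> k) = dual_to_self X f \<cdot> k"
proof -
  define h where "h = luncurry R U (\<rho>' (ds R) \<cdot> f) \<cdot> absorb X"
  have h: "h \<in> Ars" "dm h = (R \<odot> X) \<odot> ds R" "cd h = U"
    unfolding h_def using X f by simp_all
  have "luncurry R U (\<rho>' (ds R) \<cdot> (f \<cdot> k)) \<cdot> absorb (dm k)
      = luncurry R U (\<rho>' (ds R) \<cdot> f) \<cdot> ((idt R \<otimes> k) \<cdot> absorb (dm k))"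
    using luncurry_comp[of R U "\<rho>' (ds R) \<cdot> f" k] X f k by simp
  also have "\<dots> = h \<cdot> ((idt R \<otimes> k) \<otimes> idt (ds R))"
    unfolding h_def using X f k by (simp add: absorb_nat)
  finally have "rcurry R (R \<odot> dm k) (luncurry R U (\<rho>' (ds R) \<cdot> (f \<cdot> k)) \<cdot> absorb (dm k))
      = rcurry R (R \<odot> X) h \<cdot> (idt R \<otimes> k)"
    using rcurry_comp[of R "R \<odot> X" h "idt R \<otimes> k"] X h k by simp
  then have "lcurry R (dm k) (lu R \<cdot> rcurry R (R \<odot> dm k) (luncurry R U (\<rho>' (ds R) \<cdot> (f \<cdot> k)) \<cdot> absorb (dm k)))
      = lcurry R X (lu R \<cdot> rcurry R (R \<odot> X) h) \<cdot> k"
    using lcurry_comp[of R X "lu R \<cdot> rcurry R (R \<odot> X) h" k] X h k by simp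
  then show ?thesis unfolding dual_to_self_def h_def using X f k by simp
qed

lemma self_dual: "self_dual C R"
proof -
  have "isomorphic C (ds R) R"
    by (rule isomorphic_if_natural_bijection[where \<Phi> = dual_to_self and \<Psi> = self_to_dual])
      (auto simp: hom_def self_to_dual_dual_to_self dual_to_self_self_to_dual dual_to_self_comp)
  then show ?thesis unfolding self_dual_def by (rule isomorphic_sym)
qed

end

lemma (in compact_closed_cat) reflexive_obj_iff_isomorphic:
  "reflexive_obj C R \<longleftrightarrow> isomorphic C R (internal_hom C R R)"
  unfolding reflexive_obj_def isomorphic_def by blast

lemma (in compact_closed_cat) reflexive_obj_imp_self_dual:
  assumes "R \<in> Obs" and "reflexive_obj C R"
  shows "self_dual C R"
proof -
  obtain app lam where "app \<in> hom C R (ds R \<odot> R)" "lam \<in> hom C (ds R \<odot> R) R"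
    "lam \<cdot> app = idt R" "app \<cdot> lam = idt (ds R \<odot> R)"
    using assms(2) unfolding reflexive_obj_def internal_hom_def by blast
  then interpret reflexive_object C R app lam
    using assms(1) by unfold_locales (auto simp: hom_def)
  show ?thesis by (rule self_dual)
qed

theorem mainTheorem1:
  fixes C :: "('o, 'a, 'x) cc_data_scheme" and R :: 'o
  assumes "compact_closed C" and "R \<in> Ob C"
  shows "reflexive_obj C R \<longleftrightarrow> self_dual C R \<and> self_similar C R"
proof -
  interpret compact_closed_cat C by (rule compact_closed_cat.intro) fact
  have R: "R \<in> Obs" by fact
  have tensor_R: "isomorphic C (ds R \<odot> R) (R \<odot> R)" if "self_dual C R"
    using isomorphic_tensor[OF isomorphic_sym isomorphic_refl] that R unfolding self_dual_def by blast
  show ?thesis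
  proof
    assume refl: "reflexive_obj C R"
    then have sd: "self_dual C R" using R by (rule reflexive_obj_imp_self_dual[rotated])
    have "isomorphic C R (ds R \<odot> R)"
      using refl unfolding reflexive_obj_iff_isomorphic internal_hom_def .
    then have "self_similar C R"
      unfolding self_similar_def using isomorphic_trans tensor_R[OF sd] by blast
    with sd show "self_dual C R \<and> self_similar C R" ..
  next
    assume "self_dual C R \<and> self_similar C R"
    then show "reflexive_obj C R"
      unfolding reflexive_obj_iff_isomorphic internal_hom_def self_similar_def
      using isomorphic_trans isomorphic_sym tensor_R by blast
  qed
qed

end
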